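(* Let $K\ge2$, $\alpha\in(0,\infty)^K$, and let $H:\mathbb{R}^K\to\mathbb{R}$ satisfy (A1)–(A4) below at $\theta^*\in\Delta_{K-1}$. Let $N\in\mathbb{N}$ and $0<\epsilon<\min_{i:\theta^*_i>0}\theta^*_i$. Then there exists $\delta>0$, independent of $\gamma\in(0,1)$, such that for every $\gamma\in(0,1)$, as $n\to\infty$, $$\frac{\mathrm{Bias}(\hat p^\gamma_{\mathrm{IS}})^2}{\mathrm{Var}(\hat p_{\mathrm{MC}})}=O(e^{-2n\delta}).$$
   Context: $\Delta_{K-1}=\{\theta\in\mathbb{R}^K:\theta_i\ge0,\sum_i\theta_i=1\}$; $\mathrm{Dir}_\eta$ is the Dirichlet distribution with density $\frac{1}{B(\eta)}\prod_i\theta_i^{\eta_i-1}$. Target $I(n)=\mathbb{E}_{\mathrm{Dir}_\alpha}[e^{nH(\theta)}]$. $\hat p_{\mathrm{MC}}=\frac1N\sum_{i=1}^Ne^{nH(\theta^{(i)})}$, $\theta^{(i)}$ i.i.d. $\mathrm{Dir}_\alpha$; $\hat p^\gamma_{\mathrm{IS}}=\frac1N\sum_{i=1}^N e^{nH(\theta^{(i)})}\frac{\mathrm{Dir}_\alpha(\theta^{(i)})}{\mathrm{Dir}_{\alpha+n^\gamma\theta^*}(\theta^{(i)})}\mathbf{1}_{\Delta^\epsilon_{K-1}}(\theta^{(i)})$, $\theta^{(i)}$ i.i.d. $\mathrm{Dir}_{\alpha+n^\gamma\theta^*}$, with $\Delta^\epsilon_{K-1}=\{\theta\in\Delta_{K-1}:\theta_i\ge\epsilon\text{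 whenever }\theta^*_i>0\}$. $\mathrm{Bias}(\hat p)=\mathbb{E}[\hat p]-I(n)$. Conditions, with $Z=\{i:\theta^*_i=0\}$: (A1) $H$ attains its maximum over $\Delta_{K-1}$ only at $\theta^*$. (A2) $H$ is continuous on $\Delta_{K-1}$ and $C^2$ near $\theta^*$. There are unique KKT multipliers $\lambda_i\ge0$ ($i\in Z$), $\mu$ with $\nabla H(\theta^* )=-\sum_{i\in Z}\lambda_ie_i+\mu\mathbf{1}_K$. (A3) $\lambda_i>0$ for $i\in Z$. (A4) $d^\top\nabla^2H(\theta^* )d<0$ for all nonzero $d$ with $\mathbf{1}_K^\top d=0$, $d_i=0$ ($i\in Z$). *)

theory Defs
  imports "HOL-Probability.Probability" "HOL-Library.Landau_Symbols"
begin

text \<open>Coordinates of R^K are indexed by the type 'm option, so K = CARD('m) + 1 \<ge> 2.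
  The coordinate None plays the role of the last coordinate theta_K = 1 - sum of the others.\<close>

definition prob_simplex :: "(real ^ ('m::finite option)) set" where
  "prob_simplex = {\<theta>. (\<forall>i. 0 \<le> \<theta> $ i) \<and> (\<Sum>i\<in>UNIV. \<theta> $ i) = 1}"

definition simplex_emb :: "real ^ ('m::finite) \<Rightarrow> real ^ ('m option)" where
  "simplex_emb y = (\<chi> i. case i of None \<Rightarrow> 1 - (\<Sum>j\<in>UNIV. y $ j) | Some j \<Rightarrow> y $ j)"

definition dir_beta :: "real ^ ('m::finite option) \<Rightarrow> real" where
  "dir_beta \<eta> = (\<Prod>i\<in>UNIV. Gamma (\<eta> $ i)) / Gamma (\<Sum>i\<in>UNIV. \<eta> $ i)"

text \<open>Dirichlet density (w.r.t. Lebesgue measure in the first K-1 coordinates), zero off the prob_simplex.\<close>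
definition dir_pdf :: "real ^ ('m::finite option) \<Rightarrow> real ^ ('m option) \<Rightarrow> real" where
  "dir_pdf \<eta> \<theta> = (if \<theta> \<in> prob_simplex
      then (\<Prod>i\<in>UNIV. (\<theta> $ i) powr (\<eta> $ i - 1)) / dir_beta \<eta> else 0)"

definition dirichlet :: "real ^ ('m::finite option) \<Rightarrow> (real ^ ('m option)) measure" where
  "dirichlet \<eta> = distr (density lborel (\<lambda>y. ennreal (dir_pdf \<eta> (simplex_emb y)))) borel simplex_emb"

definition dir_sample :: "nat \<Rightarrow> real ^ ('m::finite option) \<Rightarrow> (nat \<Rightarrow> real ^ ('m option)) measure" where
  "dir_sample N \<eta> = PiM {..<N} (\<lambda>_. dirichlet \<eta>)"

definition Expect :: "'a measure \<Rightarrow> ('a \<Rightarrow> real) \<Rightarrow> real" where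
  "Expect M X = (\<integral>x. X x \<partial>M)"

definition Var :: "'a measure \<Rightarrow> ('a \<Rightarrow> real) \<Rightarrow> real" where
  "Var M X = (\<integral>x. (X x - Expect M X)\<^sup>2 \<partial>M)"

definition I_target :: "(real ^ ('m::finite option) \<Rightarrow> real) \<Rightarrow> real ^ ('m option) \<Rightarrow> nat \<Rightarrow> real" where
  "I_target H \<alpha> n = Expect (dirichlet \<alpha>) (\<lambda>\<theta>. exp (real n * H \<theta>))"

definition p_MC :: "(real ^ ('m::finite option) \<Rightarrow> real) \<Rightarrow> nat \<Rightarrow> nat \<Rightarrow> (nat \<Rightarrow> real ^ ('m option)) \<Rightarrow> real" where
  "p_MC H N n \<omega> = (\<Sum>i<N. exp (real n * H (\<omega> i))) / real N"

definition trunc_simplex :: "real ^ ('m::finite option) \<Rightarrow> real \<Rightarrow> (real ^ ('m option)) set" where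
  "trunc_simplex \<theta>s \<epsilon> = {\<theta> \<in> prob_simplex. \<forall>i. 0 < \<theta>s $ i \<longrightarrow> \<epsilon> \<le> \<theta> $ i}"

definition IS_param :: "real ^ ('m::finite option) \<Rightarrow> real ^ ('m option) \<Rightarrow> real \<Rightarrow> nat \<Rightarrow> real ^ ('m option)" where
  "IS_param \<alpha> \<theta>s \<gamma> n = \<alpha> + (real n powr \<gamma>) *\<^sub>R \<theta>s"

definition p_IS :: "(real ^ ('m::finite option) \<Rightarrow> real) \<Rightarrow> real ^ ('m option) \<Rightarrow> real ^ ('m option)
     \<Rightarrow> real \<Rightarrow> real \<Rightarrow> nat \<Rightarrow> nat \<Rightarrow> (nat \<Rightarrow> real ^ ('m option)) \<Rightarrow> real" where
  "p_IS H \<alpha> \<theta>s \<epsilon> \<gamma> N n \<omega> = (\<Sum>i<N. exp (real n * H (\<omega> i))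
       * (dir_pdf \<alpha> (\<omega> i) / dir_pdf (IS_param \<alpha> \<theta>s \<gamma> n) (\<omega> i))
       * indicator (trunc_simplex \<theta>s \<epsilon>) (\<omega> i)) / real N"

definition bias_IS where
  "bias_IS H \<alpha> \<theta>s \<epsilon> \<gamma> N n =
     Expect (dir_sample N (IS_param \<alpha> \<theta>s \<gamma> n)) (p_IS H \<alpha> \<theta>s \<epsilon> \<gamma> N n) - I_target H \<alpha> n"

definition var_MC where
  "var_MC H \<alpha> N n = Var (dir_sample N \<alpha>) (p_MC H N n)"

end

theory Submission
  imports Defs
begin

text \<open>The importance sampling estimator is unbiased for the integral of \<open>e\<^sup>n\<^sup>H\<close> over the truncated
  simplex, so its bias is minus the integral over the removed part. By compactness and (A1), \<open>H\<close>
  stays below some \<open>H\<^sub>1 < H(\<theta>*)\<close> there, whence \<open>|Bias| \<le> e\<^sup>n\<^sup>H\<^sup>1\<close> for every \<open>\<gamma>\<close>. On the other hand the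
  Dirichlet law charges every relatively open subset of the simplex, so \<open>I(n)\<close> is at least of
  order \<open>e\<^sup>n\<^sup>c\<close> for every \<open>c < H(\<theta>*)\<close>, while with positive probability all \<open>N\<close> Monte Carlo samples
  fall where \<open>H\<close> is smaller still; on that event the estimator misses \<open>I(n)\<close> by order \<open>e\<^sup>n\<^sup>c\<close>, so
  \<open>Var(p_MC) \<ge> \<kappa> e\<^sup>2\<^sup>n\<^sup>c\<close>. Any \<open>\<delta> < H(\<theta>*) - H\<^sub>1\<close> therefore works. Only (A1) and the continuity of \<open>H\<close>
  on the simplex enter.\<close>

lemma has_integral_Beta_scaled:
  fixes a c s :: real
  assumes a: "0 < a" and c: "0 < c" and s: "0 < s"
  shows "((\<lambda>t. t powr (a - 1) * (s - t) powr (c - 1)) has_integral s powr (a + c - 1) * Beta a c) {0..s}"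
proof -
  have "((\<lambda>t. t powr (a - 1) * (1 - t) powr (c - 1)) has_integral Beta a c) (cbox 0 1)"
    using has_integral_Beta_real[OF a c] by simp
  from has_integral_affinity[OF this, of "1/s" 0] s
  have "((\<lambda>x. (x/s) powr (a - 1) * (1 - x/s) powr (c - 1)) has_integral s * Beta a c) ((\<lambda>x. s * x) ` {0..1})"
    by simp
  moreover have "(\<lambda>x. s * x) ` {0..1} = {0..s}"
    using s by (auto simp: image_iff intro!: bexI[where x="_/s"])
  ultimately have "((\<lambda>x. (x/s) powr (a - 1) * (1 - x/s) powr (c - 1)) has_integral s * Beta a c) {0..s}"
    by simp
  then have "((\<lambda>x. (s powr (a - 1) * s powr (c - 1)) * ((x/s) powr (a - 1) * (1 - x/s) powr (c - 1)))
      has_integral (s powr (a - 1) * s powr (c - 1)) * (s * Beta a c)) {0..s}"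
    by (rule has_integral_mult_right)
  moreover have "(s powr (a - 1) * s powr (c - 1)) * ((x/s) powr (a - 1) * (1 - x/s) powr (c - 1))
      = x powr (a - 1) * (s - x) powr (c - 1)" if "x \<in> {0..s}" for x
  proof -
    have "1 - x/s = (s - x)/s" using s by (simp add: field_simps)
    then show ?thesis using that s by (simp add: powr_divide)
  qed
  moreover have "(s powr (a - 1) * s powr (c - 1)) * (s * Beta a c) = s powr (a + c - 1) * Beta a c"
    using s by (simp add: powr_add[symmetric] powr_mult_base algebra_simps)
  ultimately show ?thesis by (metis (no_types, lifting) has_integral_eq)
qed

lemma nn_integral_Beta_scaled:
  fixes a c s :: real
  assumes "0 < a" "0 < c" "0 < s"
  shows "(\<integral>\<^sup>+ t. ennreal (indicator {0..s} t * (t powr (a - 1) * (s - t) powr (c - 1))) \<partial>lborel)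
           = ennreal (s powr (a + c - 1) * Beta a c)"
proof (rule nn_integral_has_integral_lborel)
  have "(\<lambda>t. indicator {0..s} t * (t powr (a - 1) * (s - t) powr (c - 1)))
      = (\<lambda>t. if t \<in> {0..s} then t powr (a - 1) * (s - t) powr (c - 1) else 0)"
    by (auto simp: indicator_def)
  then show "((\<lambda>t. indicator {0..s} t * (t powr (a - 1) * (s - t) powr (c - 1)))
      has_integral s powr (a + c - 1) * Beta a c) UNIV"
    using has_integral_Beta_scaled[OF assms] by (simp only: has_integral_restrict_UNIV)
qed (simp_all add: indicator_def)

lemma nn_integral_Beta_scaled_cmult:
  fixes a c s C :: real
  assumes a: "0 < a" and c: "0 < c" and s: "0 < s" and C: "0 \<le> C"
  shows "(\<integral>\<^sup>+ t. ennreal (indicator {0..} t * t powr (a - 1)) * ennreal (indicator {..<s} t * ((s - t) powr (c - 1) * C)) \<partial>lborel)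
           = ennreal (s powr (a + c - 1) * Beta a c * C)"
proof -
  have "ennreal (indicator {0..} t * t powr (a - 1)) * ennreal (indicator {..<s} t * ((s - t) powr (c - 1) * C))
      = ennreal (indicator {0..s} t * (t powr (a - 1) * (s - t) powr (c - 1))) * ennreal C" for t
  proof -
    have "indicator {0..} t * t powr (a - 1) * (indicator {..<s} t * ((s - t) powr (c - 1) * C))
        = indicator {0..s} t * (t powr (a - 1) * (s - t) powr (c - 1)) * C"
      by (auto simp: indicator_def)
    moreover have "0 \<le> indicator {0..} t * t powr (a - 1)" "0 \<le> indicator {..<s} t * ((s - t) powr (c - 1) * C)"
      "0 \<le> indicator {0..s} t * (t powr (a - 1) * (s - t) powr (c - 1))"
      using C by (auto simp: indicator_def)
    ultimately show ?thesis
      using C by (simp only: ennreal_mult[symmetric])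
  qed
  then have "(\<integral>\<^sup>+ t. ennreal (indicator {0..} t * t powr (a - 1)) * ennreal (indicator {..<s} t * ((s - t) powr (c - 1) * C)) \<partial>lborel)
      = (\<integral>\<^sup>+ t. ennreal (indicator {0..s} t * (t powr (a - 1) * (s - t) powr (c - 1))) \<partial>lborel) * ennreal C"
    by (simp add: nn_integral_multc)
  also have "\<dots> = ennreal (s powr (a + c - 1) * Beta a c * C)"
  proof -
    have "0 < Beta a c"
      unfolding Beta_def using a c by (intro divide_pos_pos mult_pos_pos Gamma_real_pos) auto
    then show ?thesis
      unfolding nn_integral_Beta_scaled[OF a c s] using C by (subst ennreal_mult[symmetric]) auto
  qed
  finally show ?thesis .
qed

definition dirichlet_kernel :: "'b set \<Rightarrow> ('b \<Rightarrow> real) \<Rightarrow> real \<Rightarrow> real \<Rightarrow> ('b \<Rightarrow> real) \<Rightarrow> real" where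
  "dirichlet_kernel J a b s x = (\<Prod>j\<in>J. indicator {0..} (x j) * x j powr (a j - 1)) *
     (indicator {0..} (s - sum x J) * (s - sum x J) powr (b - 1))"

lemma dirichlet_kernel_nonneg: "0 \<le> dirichlet_kernel J a b s x"
  unfolding dirichlet_kernel_def by (intro mult_nonneg_nonneg prod_nonneg) (auto simp: indicator_def)

lemma dirichlet_kernel_nonpos_total:
  assumes "s \<le> 0"
  shows "dirichlet_kernel J a b s x = 0"
proof (cases "finite J \<and> (\<forall>j\<in>J. 0 \<le> x j)")
  case True
  then have "0 \<le> sum x J" by (simp add: sum_nonneg)
  then have "s - sum x J < 0 \<or> s - sum x J = 0"
    using assms by linarith
  then show ?thesis unfolding dirichlet_kernel_def by (auto simp: indicator_def)
next
  case False
  then consider "infinite J" | j where "finite J" "j \<in> J" "x j < 0"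
    by force
  then show ?thesis
  proof cases
    case 1
    then have "s < 0 \<or> s = 0" using assms by linarith
    then show ?thesis using 1 unfolding dirichlet_kernel_def by (auto simp: indicator_def)
  next
    case 2
    then have "(\<Prod>j\<in>J. indicator {0..} (x j) * x j powr (a j - 1)) = (0::real)"
      by (intro prod_zero bexI[of _ j]) (auto simp: indicator_def)
    then show ?thesis unfolding dirichlet_kernel_def by simp
  qed
qed

lemma dirichlet_kernel_insert:
  assumes "finite J" "i \<notin> J"
  shows "dirichlet_kernel (insert i J) a b s (x(i := t))
           = (indicator {0..} t * t powr (a i - 1)) * dirichlet_kernel J a b (s - t) x"
proof -
  have "(\<Prod>j\<in>J. indicator {0..} ((x(i := t)) j) * (x(i := t)) j powr (a j - 1))
      = (\<Prod>j\<in>J. indicator {0..} (x j) * x j powr (a j - 1))"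
    using assms by (intro prod.cong) auto
  moreover have "sum (x(i := t)) J = sum x J"
    using assms by (intro sum.cong) auto
  ultimately show ?thesis
    unfolding dirichlet_kernel_def prod.insert[OF assms] sum.insert[OF assms]
    by (simp add: algebra_simps)
qed

lemma borel_measurable_dirichlet_kernel:
  "finite J \<Longrightarrow> dirichlet_kernel J a b s \<in> borel_measurable (PiM J (\<lambda>_. lborel))"
  unfolding dirichlet_kernel_def by measurable

interpretation lborel_product: product_sigma_finite "\<lambda>_. lborel :: real measure"
  by unfold_locales

text \<open>Integrating out one coordinate at a time, each step is a scaled Beta integral.\<close>

lemma nn_integral_dirichlet_kernel:
  fixes a :: "'b \<Rightarrow> real"
  assumes "finite J" "\<forall>j\<in>J. 0 < a j" "0 < b" "0 < s"
  shows "(\<integral>\<^sup>+ x. ennreal (dirichlet_kernel J a b s x) \<partial>PiM J (\<lambda>_. lborel)) =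
     ennreal (s powr (sum a J + b - 1) * (\<Prod>j\<in>J. Gamma (a j)) * Gamma b / Gamma (sum a J + b))"
  using assms
proof (induction J arbitrary: s rule: finite_induct)
  case empty
  have "Gamma b > 0" using empty.prems by (intro Gamma_real_pos) auto
  then show ?case using empty.prems
    by (simp add: PiM_empty nn_integral_count_space_finite dirichlet_kernel_def del: Gamma_real_pos)
next
  case (insert i J)
  define A where "A = sum a J"
  define C where "C = (\<Prod>j\<in>J. Gamma (a j)) * Gamma b / Gamma (A + b)"
  have A: "0 \<le> A" unfolding A_def by (rule sum_nonneg) (use insert.prems in force)
  have ai: "0 < a i" using insert.prems by auto
  have C: "0 \<le> C" unfolding C_def using insert.prems A
    by (intro less_imp_le divide_pos_pos mult_pos_pos prod_pos Gamma_real_pos) auto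
  have kernel_measurable: "(\<lambda>x. ennreal (dirichlet_kernel K a b r x)) \<in> borel_measurable (PiM K (\<lambda>_. lborel))"
    if "finite K" for K r
    using borel_measurable_dirichlet_kernel[OF that] by (rule measurable_compose) simp
  have inner: "(\<integral>\<^sup>+ x. ennreal (dirichlet_kernel J a b (s - t) x) \<partial>PiM J (\<lambda>_. lborel)) =
      ennreal (indicator {..<s} t * ((s - t) powr (A + b - 1) * C))" for t
  proof (cases "t < s")
    case True
    then show ?thesis using insert.IH[of "s - t"] insert.prems
      by (simp add: A_def C_def mult.assoc)
  qed (simp add: dirichlet_kernel_nonpos_total)
  have "(\<integral>\<^sup>+ x. ennreal (dirichlet_kernel (insert i J) a b s x) \<partial>PiM (insert i J) (\<lambda>_. lborel)) =
     (\<integral>\<^sup>+ t. (\<integral>\<^sup>+ x. ennreal (dirichlet_kernel (insert i J) a b s (x(i := t))) \<partial>PiM J (\<lambda>_. lborel)) \<partial>lborel)"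
    using insert.hyps kernel_measurable by (intro lborel_product.product_nn_integral_insert_rev) auto
  also have "\<dots> = (\<integral>\<^sup>+ t. ennreal (indicator {0..} t * t powr (a i - 1)) *
      (\<integral>\<^sup>+ x. ennreal (dirichlet_kernel J a b (s - t) x) \<partial>PiM J (\<lambda>_. lborel)) \<partial>lborel)"
  proof (rule nn_integral_cong)
    fix t :: real
    have "0 \<le> indicator {0..} t * t powr (a i - 1)" by (simp add: indicator_def)
    then show "(\<integral>\<^sup>+ x. ennreal (dirichlet_kernel (insert i J) a b s (x(i := t))) \<partial>PiM J (\<lambda>_. lborel))
        = ennreal (indicator {0..} t * t powr (a i - 1)) *
          (\<integral>\<^sup>+ x. ennreal (dirichlet_kernel J a b (s - t) x) \<partial>PiM J (\<lambda>_. lborel))"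
      using insert.hyps kernel_measurable
      by (simp add: dirichlet_kernel_insert ennreal_mult dirichlet_kernel_nonneg nn_integral_cmult)
  qed
  also have "\<dots> = ennreal (s powr (a i + (A + b) - 1) * Beta (a i) (A + b) * C)"
    unfolding inner using ai A C insert.prems by (intro nn_integral_Beta_scaled_cmult) auto
  also have "\<dots> = ennreal (s powr (sum a (insert i J) + b - 1) * (\<Prod>j\<in>insert i J. Gamma (a j)) * Gamma b
                      / Gamma (sum a (insert i J) + b))"
  proof -
    have "Gamma (A + b) > 0" using A insert.prems by (intro Gamma_real_pos) auto
    then show ?thesis
      using insert.hyps unfolding Beta_def C_def A_def by (simp add: field_simps)
  qed
  finally show ?case .
qed

lemma sum_UNIV_option: "(\<Sum>i\<in>(UNIV::'a::finite option set). g i) = g None + (\<Sum>j\<in>UNIV. g (Some j))"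
  by (simp add: UNIV_option_conv sum.reindex)

lemma prod_UNIV_option: "(\<Prod>i\<in>(UNIV::'a::finite option set). g i) = g None * (\<Prod>j\<in>UNIV. g (Some j))"
  by (simp add: UNIV_option_conv prod.reindex)

lemma Basis_real_vec: "(Basis :: (real^'m::finite) set) = range (\<lambda>j. axis j 1)"
  by (auto simp: Basis_vec_def)

lemma inj_axis_1: "inj (\<lambda>j::'m::finite. axis j (1::real))"
  by (auto simp: inj_def axis_eq_axis)

lemma sum_Basis_real_vec: "(\<Sum>b\<in>(Basis :: (real^'m::finite) set). f b) = (\<Sum>j\<in>UNIV. f (axis j 1))"
  unfolding Basis_real_vec by (subst sum.reindex[OF inj_axis_1]) simp

lemma prod_Basis_real_vec: "(\<Prod>b\<in>(Basis :: (real^'m::finite) set). f b) = (\<Prod>j\<in>UNIV. f (axis j 1))"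
  unfolding Basis_real_vec by (subst prod.reindex[OF inj_axis_1]) simp

lemma sum_Basis_scaleR_component: "(\<Sum>b\<in>(Basis :: (real^'m::finite) set). f b *\<^sub>R b) $ j = f (axis j 1)"
  by (simp add: sum_component sum_Basis_real_vec axis_def if_distrib cong: if_cong)

lemma sum_simplex_emb: "(\<Sum>i\<in>UNIV. simplex_emb y $ i) = 1"
  by (simp add: sum_UNIV_option simplex_emb_def)

lemma simplex_emb_free_coordinates:
  assumes "(\<Sum>i\<in>UNIV. \<theta> $ i) = 1"
  shows "simplex_emb (\<chi> j. \<theta> $ Some j) = (\<theta> :: real^('m::finite option))"
proof -
  have "\<theta> $ None = 1 - (\<Sum>j\<in>UNIV. \<theta> $ Some j)" using assms by (simp add: sum_UNIV_option)
  then show ?thesis unfolding simplex_emb_def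
    by (auto simp: vec_eq_iff split: option.splits)
qed

lemma continuous_simplex_emb: "continuous_on UNIV (simplex_emb :: real^'m::finite \<Rightarrow> real^'m option)"
  unfolding simplex_emb_def
proof (rule continuous_on_vec_lambda)
  show "continuous_on UNIV (\<lambda>y::real^'m. case i of None \<Rightarrow> 1 - (\<Sum>j\<in>UNIV. y $ j) | Some j \<Rightarrow> y $ j)"
    for i :: "'m option"
    by (cases i) (auto intro!: continuous_intros)
qed

lemma borel_measurable_simplex_emb[measurable]:
  "(simplex_emb :: real^'m::finite \<Rightarrow> real^'m option) \<in> borel_measurable borel"
  by (rule borel_measurable_continuous_onI[OF continuous_simplex_emb])

lemma compact_prob_simplex: "compact (prob_simplex :: (real^'m::finite option) set)"
proof (rule compact_eq_bounded_closed[THEN iffD2, OF conjI])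
  have "prob_simplex = (\<Inter>i. {\<theta>::real^'m option. 0 \<le> \<theta> $ i}) \<inter> {\<theta>. (\<Sum>i\<in>UNIV. \<theta> $ i) = 1}"
    unfolding prob_simplex_def by auto
  also have "closed \<dots>"
    by (intro closed_Int closed_INT ballI closed_Collect_le closed_Collect_eq continuous_intros)
  finally show "closed (prob_simplex :: (real^'m::finite option) set)" .
  have "norm \<theta> \<le> 1" if "\<theta> \<in> prob_simplex" for \<theta> :: "real^'m option"
    using norm_le_l1_cart[of \<theta>] that unfolding prob_simplex_def by simp
  then show "bounded (prob_simplex :: (real^'m::finite option) set)"
    unfolding bounded_iff by blast
qed

lemma sets_prob_simplex[measurable]: "(prob_simplex :: (real^'m::finite option) set) \<in> sets borel"
  using compact_prob_simplex by (intro borel_closed compact_imp_closed)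

lemma dir_beta_pos: "\<forall>i. 0 < \<eta> $ i \<Longrightarrow> 0 < dir_beta \<eta>"
  unfolding dir_beta_def by (intro divide_pos_pos prod_pos Gamma_real_pos sum_pos) auto

lemma dir_pdf_nonneg: "\<forall>i. 0 < \<eta> $ i \<Longrightarrow> 0 \<le> dir_pdf \<eta> \<theta>"
  unfolding dir_pdf_def using dir_beta_pos[of \<eta>]
  by (auto intro!: divide_nonneg_pos prod_nonneg)

lemma dir_pdf_eq_0_iff:
  "\<forall>i. 0 < \<eta> $ i \<Longrightarrow> dir_pdf \<eta> \<theta> = 0 \<longleftrightarrow> \<theta> \<notin> prob_simplex \<or> (\<exists>i. \<theta> $ i = 0)"
  unfolding dir_pdf_def using dir_beta_pos[of \<eta>] by (auto simp: prod_zero_iff)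

lemma borel_measurable_dir_pdf[measurable]: "dir_pdf \<eta> \<in> borel_measurable borel"
  unfolding dir_pdf_def by measurable

lemma dir_pdf_simplex_emb_eq_dirichlet_kernel:
  fixes \<eta> :: "real ^ ('m::finite option)"
  defines "a \<equiv> \<lambda>b. \<eta> $ Some (inv (\<lambda>j::'m. axis j (1::real)) b)"
  shows "dir_pdf \<eta> (simplex_emb (\<Sum>b\<in>Basis. f b *\<^sub>R b)) = dirichlet_kernel Basis a (\<eta> $ None) 1 f / dir_beta \<eta>"
proof -
  have a_axis: "a (axis j 1) = \<eta> $ Some j" for j
    unfolding a_def by (simp add: inv_f_f[OF inj_axis_1])
  define y :: "real^'m" where "y = (\<Sum>b\<in>Basis. f b *\<^sub>R b)"
  have y: "y $ j = f (axis j 1)" for j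
    unfolding y_def by (rule sum_Basis_scaleR_component)
  have "simplex_emb y \<in> prob_simplex \<longleftrightarrow> (\<forall>j. 0 \<le> y $ j) \<and> 0 \<le> 1 - (\<Sum>j\<in>UNIV. y $ j)"
    unfolding prob_simplex_def using sum_simplex_emb[of y]
    by (auto simp: simplex_emb_def split: option.splits)
  then show ?thesis
    unfolding y_def[symmetric] dir_pdf_def dirichlet_kernel_def sum_Basis_real_vec prod_Basis_real_vec
    by (auto simp: prod_UNIV_option simplex_emb_def y a_axis indicator_def prod_zero_iff mult.commute)
qed

lemma nn_integral_dir_pdf_simplex_emb:
  fixes \<eta> :: "real ^ ('m::finite option)"
  assumes pos: "\<forall>i. 0 < \<eta> $ i"
  shows "(\<integral>\<^sup>+ y. ennreal (dir_pdf \<eta> (simplex_emb (y :: real^'m))) \<partial>lborel) = 1"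
proof -
  define a where "a b = \<eta> $ Some (inv (\<lambda>j::'m. axis j (1::real)) b)" for b :: "real^'m"
  have a_axis: "a (axis j 1) = \<eta> $ Some j" for j
    unfolding a_def by (simp add: inv_f_f[OF inj_axis_1])
  have B: "0 < dir_beta \<eta>" using dir_beta_pos[OF pos] .
  have a_pos: "\<forall>b\<in>(Basis :: (real^'m) set). 0 < a b"
    using pos by (simp add: Basis_real_vec a_axis)
  have normaliser: "(\<Prod>j\<in>Basis. Gamma (a j)) * Gamma (\<eta> $ None)
      / Gamma (sum a Basis + \<eta> $ None) = dir_beta \<eta>"
    unfolding dir_beta_def sum_UNIV_option prod_UNIV_option sum_Basis_real_vec prod_Basis_real_vec a_axis
    by (simp add: mult.commute add.commute)
  have "(\<integral>\<^sup>+ y. ennreal (dir_pdf \<eta> (simplex_emb (y :: real^'m))) \<partial>lborel) =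
        (\<integral>\<^sup>+ f. ennreal (dirichlet_kernel Basis a (\<eta> $ None) 1 f) * ennreal (1 / dir_beta \<eta>) \<partial>PiM Basis (\<lambda>_. lborel))"
    using B
    by (subst lborel_eq, subst nn_integral_distr)
       (auto simp: dir_pdf_simplex_emb_eq_dirichlet_kernel a_def[abs_def] dirichlet_kernel_nonneg ennreal_mult[symmetric]
             intro!: nn_integral_cong)
  also have "\<dots> = (\<integral>\<^sup>+ f. ennreal (dirichlet_kernel Basis a (\<eta> $ None) 1 f) \<partial>PiM Basis (\<lambda>_. lborel))
      * ennreal (1 / dir_beta \<eta>)"
    using borel_measurable_dirichlet_kernel[of Basis a "\<eta> $ None" 1]
    by (intro nn_integral_multc) (simp_all add: measurable_compose)
  also have "\<dots> = ennreal (dir_beta \<eta>) * ennreal (1 / dir_beta \<eta>)"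
    using nn_integral_dirichlet_kernel[OF finite_Basis a_pos _ zero_less_one] pos normaliser by simp
  also have "\<dots> = 1"
    using B by (simp flip: ennreal_mult)
  finally show ?thesis .
qed

lemma sets_dirichlet[simp, measurable_cong]: "sets (dirichlet \<eta>) = sets borel"
  by (simp add: dirichlet_def)

lemma space_dirichlet[simp]: "space (dirichlet \<eta>) = UNIV"
  by (simp add: dirichlet_def)

lemma prob_space_dirichlet: "\<forall>i. 0 < \<eta> $ i \<Longrightarrow> prob_space (dirichlet \<eta>)"
  unfolding dirichlet_def
  by (intro prob_space.prob_space_distr prob_spaceI)
     (simp_all add: emeasure_density nn_integral_dir_pdf_simplex_emb)

lemma AE_dirichlet_prob_simplex: "AE \<theta> in dirichlet \<eta>. \<theta> \<in> prob_simplex"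
  unfolding dirichlet_def
  by (subst AE_distr_iff) (auto simp: AE_density dir_pdf_def intro!: AE_I2)

lemma integrable_dirichlet_iff:
  assumes "\<forall>i. 0 < \<eta> $ i" "k \<in> borel_measurable borel"
  shows "integrable (dirichlet \<eta>) k \<longleftrightarrow>
           integrable lborel (\<lambda>y::real^'m::finite. dir_pdf \<eta> (simplex_emb y) * k (simplex_emb y))"
  unfolding dirichlet_def using assms dir_pdf_nonneg[OF assms(1)]
  by (simp add: integrable_distr_eq integrable_density)

lemma integral_dirichlet:
  assumes "\<forall>i. 0 < \<eta> $ i" "k \<in> borel_measurable borel"
  shows "integral\<^sup>L (dirichlet \<eta>) k =
           integral\<^sup>L lborel (\<lambda>y::real^'m::finite. dir_pdf \<eta> (simplex_emb y) * k (simplex_emb y))"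
  unfolding dirichlet_def using assms dir_pdf_nonneg[OF assms(1)]
  by (simp add: integral_distr integral_density)

lemma integrable_dirichlet_bounded:
  assumes "\<forall>i. 0 < \<eta> $ i" "f \<in> borel_measurable borel" "\<forall>\<theta>\<in>prob_simplex. \<bar>f \<theta>\<bar> \<le> C"
  shows "integrable (dirichlet \<eta>) (f :: _ \<Rightarrow> real)"
proof -
  interpret prob_space "dirichlet \<eta>" using prob_space_dirichlet[OF assms(1)] .
  show ?thesis
    using assms AE_dirichlet_prob_simplex[of \<eta>]
    by (intro integrable_const_bound[where B=C]) (auto elim!: AE_mp)
qed

lemma dirichlet_importance_weight:
  fixes \<alpha> \<beta> :: "real^('m::finite option)"
  assumes \<alpha>: "\<forall>i. 0 < \<alpha> $ i" and \<beta>: "\<forall>i. 0 < \<beta> $ i"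
    and g: "g \<in> borel_measurable borel" "integrable (dirichlet \<alpha>) g"
  shows "integrable (dirichlet \<beta>) (\<lambda>\<theta>. g \<theta> * (dir_pdf \<alpha> \<theta> / dir_pdf \<beta> \<theta>))"
    and "(\<integral>\<theta>. g \<theta> * (dir_pdf \<alpha> \<theta> / dir_pdf \<beta> \<theta>) \<partial>dirichlet \<beta>) = (\<integral>\<theta>. g \<theta> \<partial>dirichlet \<alpha>)"
proof -
  let ?h = "\<lambda>\<theta>. g \<theta> * (dir_pdf \<alpha> \<theta> / dir_pdf \<beta> \<theta>)"
  have h: "?h \<in> borel_measurable borel" using g(1) by measurable
  have "dir_pdf \<beta> \<theta> * ?h \<theta> = dir_pdf \<alpha> \<theta> * g \<theta>" for \<theta>
    using dir_pdf_eq_0_iff[OF \<alpha>, of \<theta>] dir_pdf_eq_0_iff[OF \<beta>, of \<theta>] by auto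
  then have eq: "(\<lambda>y. dir_pdf \<beta> (simplex_emb y) * ?h (simplex_emb y))
      = (\<lambda>y::real^'m. dir_pdf \<alpha> (simplex_emb y) * g (simplex_emb y))"
    by presburger
  show "integrable (dirichlet \<beta>) ?h"
    using g(2) unfolding integrable_dirichlet_iff[OF \<beta> h] integrable_dirichlet_iff[OF \<alpha> g(1)] eq .
  show "integral\<^sup>L (dirichlet \<beta>) ?h = integral\<^sup>L (dirichlet \<alpha>) g"
    unfolding integral_dirichlet[OF \<beta> h] integral_dirichlet[OF \<alpha> g(1)] eq ..
qed

lemma emeasure_lborel_open_pos:
  fixes A :: "'a::euclidean_space set"
  assumes "open A" "x \<in> A"
  shows "0 < emeasure lborel A"
proof -
  obtain a b where ab: "box a b \<subseteq> A" "x \<in> box a b" "\<forall>i\<in>Basis. a \<bullet> i < b \<bullet> i"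
    using open_contains_box[OF assms] by blast
  have "0 < emeasure lborel (box a b)"
    using ab(3) by (subst emeasure_lborel_box) (auto intro!: prod_pos simp: inner_diff_left less_imp_le)
  also have "\<dots> \<le> emeasure lborel A"
    using ab(1) assms(1) by (intro emeasure_mono) auto
  finally show ?thesis .
qed

text \<open>Needed because the Dirichlet density vanishes on the boundary of the simplex; the approximating
  points move towards the barycentre.\<close>

lemma prob_simplex_positive_approx:
  fixes \<theta>\<^sub>0 :: "real^('m::finite option)"
  assumes \<theta>\<^sub>0: "\<theta>\<^sub>0 \<in> prob_simplex" and r: "0 < r"
  obtains \<theta> where "\<forall>i. 0 < \<theta> $ i" "(\<Sum>i\<in>UNIV. \<theta> $ i) = 1" "dist \<theta> \<theta>\<^sub>0 < r"
proof
  define K where "K = real CARD('m option)"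
  define u :: "real^('m option)" where "u = (\<chi> i. 1 / K)"
  define d where "d = norm (u - \<theta>\<^sub>0) + 1"
  define t where "t = min 1 (r / d) / 2"
  define \<theta> where "\<theta> = (1 - t) *\<^sub>R \<theta>\<^sub>0 + t *\<^sub>R u"
  have K: "0 < K" and d: "1 \<le> d" unfolding K_def d_def by simp_all
  have "0 < r / d" "min 1 (r / d) \<le> r / d" "min 1 (r / d) \<le> 1"
    using r d by simp_all
  then have "t * d \<le> r / d / 2 * d"
    using d unfolding t_def by (intro mult_right_mono) auto
  then have t: "0 < t" "t \<le> 1/2" "t * d \<le> r / 2"
    using d \<open>0 < r / d\<close> \<open>min 1 (r / d) \<le> 1\<close> unfolding t_def by simp_all
  have \<theta>_coord: "\<theta> $ i = (1 - t) * \<theta>\<^sub>0 $ i + t / K" for i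
    unfolding \<theta>_def u_def by simp
  show "\<forall>i. 0 < \<theta> $ i"
  proof
    fix i
    have "0 \<le> (1 - t) * \<theta>\<^sub>0 $ i"
      using \<theta>\<^sub>0 t unfolding prob_simplex_def by simp
    moreover have "0 < t / K"
      using t K by simp
    ultimately show "0 < \<theta> $ i"
      unfolding \<theta>_coord by (rule add_nonneg_pos)
  qed
  show "(\<Sum>i\<in>UNIV. \<theta> $ i) = 1"
    using \<theta>\<^sub>0 K unfolding \<theta>_coord prob_simplex_def K_def by (simp add: sum.distrib flip: sum_distrib_left)
  have "\<theta> - \<theta>\<^sub>0 = t *\<^sub>R (u - \<theta>\<^sub>0)"
    unfolding \<theta>_def by (simp add: algebra_simps)
  then have "dist \<theta> \<theta>\<^sub>0 = t * norm (u - \<theta>\<^sub>0)"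
    using t by (simp add: dist_norm)
  also have "\<dots> < t * d"
    using t unfolding d_def by simp
  finally show "dist \<theta> \<theta>\<^sub>0 < r"
    using t r by linarith
qed

lemma nn_integral_lborel_pos_on_open:
  fixes f :: "'a::euclidean_space \<Rightarrow> real"
  assumes f[measurable]: "f \<in> borel_measurable borel"
    and Q: "open Q" "x \<in> Q" and pos: "\<forall>y\<in>Q. 0 < f y"
  shows "(\<integral>\<^sup>+ y. ennreal (f y) \<partial>lborel) \<noteq> 0"
proof
  assume "(\<integral>\<^sup>+ y. ennreal (f y) \<partial>lborel) = 0"
  then have "AE y in lborel. ennreal (f y) = 0"
    by (subst (asm) nn_integral_0_iff_AE) measurable
  then have "AE y in lborel. y \<notin> Q"
    by eventually_elim (use pos in force)
  then have "emeasure lborel Q = 0"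
    using Q by (subst (asm) AE_iff_measurable[of Q]) auto
  then show False
    using emeasure_lborel_open_pos[OF Q] by simp
qed

lemma emeasure_dirichlet:
  assumes [measurable]: "A \<in> sets borel"
  shows "emeasure (dirichlet \<eta>) A
           = (\<integral>\<^sup>+ y. ennreal (dir_pdf \<eta> (simplex_emb y) * indicator A (simplex_emb y)) \<partial>lborel)"
proof -
  have "emeasure (dirichlet \<eta>) A
      = (\<integral>\<^sup>+ y. ennreal (dir_pdf \<eta> (simplex_emb y)) * indicator (simplex_emb -` A) y \<partial>lborel)"
    unfolding dirichlet_def
    using measurable_sets[OF borel_measurable_simplex_emb assms]
    by (simp add: emeasure_distr emeasure_density)
  also have "\<dots> = (\<integral>\<^sup>+ y. ennreal (dir_pdf \<eta> (simplex_emb y) * indicator A (simplex_emb y)) \<partial>lborel)"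
    by (intro nn_integral_cong) (auto simp: indicator_def)
  finally show ?thesis .
qed

lemma measure_dirichlet_openin_pos:
  fixes \<eta> :: "real^('m::finite option)"
  assumes pos: "\<forall>i. 0 < \<eta> $ i"
    and A: "openin (top_of_set prob_simplex) A" and "\<theta>\<^sub>0 \<in> A"
  shows "0 < measure (dirichlet \<eta>) A"
proof -
  interpret prob_space "dirichlet \<eta>" using prob_space_dirichlet[OF pos] .
  obtain T where T: "open T" "A = prob_simplex \<inter> T"
    using A unfolding openin_open by blast
  have "\<theta>\<^sub>0 \<in> T" "\<theta>\<^sub>0 \<in> prob_simplex"
    using T \<open>\<theta>\<^sub>0 \<in> A\<close> by auto
  then obtain r where r: "0 < r" "ball \<theta>\<^sub>0 r \<subseteq> T"
    using \<open>open T\<close> open_contains_ball by blast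
  obtain \<theta> where \<theta>: "\<forall>i. 0 < \<theta> $ i" "(\<Sum>i\<in>UNIV. \<theta> $ i) = 1" "dist \<theta> \<theta>\<^sub>0 < r"
    using prob_simplex_positive_approx[OF \<open>\<theta>\<^sub>0 \<in> prob_simplex\<close> r(1)] .
  define Q where "Q = simplex_emb -` (T \<inter> (\<Inter>i. {\<theta>::real^('m option). 0 < \<theta> $ i}))"
  have "open Q" unfolding Q_def
    by (intro open_vimage continuous_simplex_emb open_Int \<open>open T\<close> open_INT)
       (auto intro!: open_Collect_less continuous_intros)
  moreover have "(\<chi> j. \<theta> $ Some j) \<in> Q"
    unfolding Q_def using simplex_emb_free_coordinates[OF \<theta>(2)] \<theta> r
    by (auto simp: dist_commute)
  moreover have "0 < dir_pdf \<eta> (simplex_emb y) * indicator A (simplex_emb y)" if "y \<in> Q" for y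
  proof -
    have coords: "\<forall>i. 0 < simplex_emb y $ i" and "simplex_emb y \<in> T"
      using that unfolding Q_def by auto
    moreover have "simplex_emb y \<in> prob_simplex"
      using coords sum_simplex_emb[of y] unfolding prob_simplex_def by (auto intro: less_imp_le)
    moreover have "dir_pdf \<eta> (simplex_emb y) \<noteq> 0"
      using dir_pdf_eq_0_iff[OF pos] coords calculation by (metis less_irrefl)
    ultimately show ?thesis
      using dir_pdf_nonneg[OF pos] T by (simp add: order_less_le)
  qed
  moreover have [measurable]: "A \<in> sets borel"
    using T by auto
  ultimately have "emeasure (dirichlet \<eta>) A \<noteq> 0"
    unfolding emeasure_dirichlet[OF \<open>A \<in> sets borel\<close>]
    by (intro nn_integral_lborel_pos_on_open) auto
  then show ?thesis
    using emeasure_eq_measure[of A] by (simp add: zero_less_measure_iff)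
qed

lemma PiM_coordinate_integral:
  fixes f :: "'a \<Rightarrow> real"
  assumes M: "prob_space M" and i: "i < N" and f[measurable]: "f \<in> borel_measurable M"
  shows "integrable (PiM {..<N} (\<lambda>_. M)) (\<lambda>\<omega>. f (\<omega> i)) \<longleftrightarrow> integrable M f"
    and "(\<integral>\<omega>. f (\<omega> i) \<partial>PiM {..<N} (\<lambda>_. M)) = integral\<^sup>L M f"
proof -
  have distr: "distr (PiM {..<N} (\<lambda>_. M)) M (\<lambda>\<omega>. \<omega> i) = M"
    using M i by (intro distr_PiM_component) auto
  have coordinate: "(\<lambda>\<omega>. \<omega> i) \<in> PiM {..<N} (\<lambda>_. M) \<rightarrow>\<^sub>M M"
    using i by (intro measurable_component_singleton) auto
  show "integrable (PiM {..<N} (\<lambda>_. M)) (\<lambda>\<omega>. f (\<omega> i)) \<longleftrightarrow> integrable M f"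
    using integrable_distr_eq[OF coordinate f] distr by simp
  show "(\<integral>\<omega>. f (\<omega> i) \<partial>PiM {..<N} (\<lambda>_. M)) = integral\<^sup>L M f"
    using integral_distr[OF coordinate f] distr by simp
qed

lemma integral_sample_mean:
  fixes f :: "'a \<Rightarrow> real"
  assumes M: "prob_space M" and N: "0 < N" and f: "f \<in> borel_measurable M" "integrable M f"
  shows "(\<integral>\<omega>. (\<Sum>i<N. f (\<omega> i)) / real N \<partial>PiM {..<N} (\<lambda>_. M)) = integral\<^sup>L M f"
proof -
  have "(\<integral>\<omega>. (\<Sum>i<N. f (\<omega> i)) / real N \<partial>PiM {..<N} (\<lambda>_. M))
      = (\<Sum>i<N. \<integral>\<omega>. f (\<omega> i) \<partial>PiM {..<N} (\<lambda>_. M)) / real N"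
    using PiM_coordinate_integral(1)[OF M _ f(1)] f(2)
    by (subst integral_divide_zero, subst Bochner_Integration.integral_sum) auto
  also have "\<dots> = (\<Sum>i<N. integral\<^sup>L M f) / real N"
    using PiM_coordinate_integral(2)[OF M _ f(1)] by (intro arg_cong[where f="\<lambda>x. x / real N"] sum.cong) auto
  also have "\<dots> = integral\<^sup>L M f"
    using N by simp
  finally show ?thesis .
qed

lemma AE_PiM_all_coordinates:
  fixes N :: nat
  assumes M: "prob_space M" and P: "AE x in M. P x"
  shows "AE \<omega> in PiM {..<N} (\<lambda>_. M). \<forall>i<N. P (\<omega> i)"
proof -
  have "\<forall>i\<in>{..<N}. AE \<omega> in PiM {..<N} (\<lambda>_. M). P (\<omega> i)"
    using AE_PiM_component[of "{..<N}" "\<lambda>_. M" _ P] M P by auto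
  then have "AE \<omega> in PiM {..<N} (\<lambda>_. M). \<forall>i\<in>{..<N}. P (\<omega> i)"
    by (intro eventually_ball_finite) auto
  then show ?thesis
    by (rule AE_mp) (auto intro!: AE_I2)
qed

lemma measure_PiM_PiE_power:
  fixes N :: nat
  assumes M: "prob_space M" and B: "B \<in> sets M"
  shows "measure (PiM {..<N} (\<lambda>_. M)) (PiE {..<N} (\<lambda>_. B)) = measure M B ^ N"
proof -
  interpret prob_space M using M .
  interpret finite_product_prob_space "\<lambda>_. M" "{..<N}"
    by unfold_locales auto
  show ?thesis using finite_measure_PiM_emb[of "\<lambda>_. B"] B by simp
qed

lemma prob_space_dir_sample: "\<forall>i. 0 < \<eta> $ i \<Longrightarrow> prob_space (dir_sample N \<eta>)"
  unfolding dir_sample_def by (intro prob_space_PiM prob_space_dirichlet)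

lemma IS_param_pos:
  assumes "\<forall>i. 0 < \<alpha> $ i" "\<theta>s \<in> prob_simplex"
  shows "\<forall>i. 0 < IS_param \<alpha> \<theta>s \<gamma> n $ i"
  using assms unfolding IS_param_def prob_simplex_def by (auto intro: add_pos_nonneg)

lemma sets_trunc_simplex[measurable]: "trunc_simplex \<theta>s \<epsilon> \<in> sets borel"
proof -
  have "trunc_simplex \<theta>s \<epsilon> = prob_simplex \<inter> (\<Inter>i\<in>{i. 0 < \<theta>s $ i}. {\<theta>. \<epsilon> \<le> \<theta> $ i})"
    unfolding trunc_simplex_def by auto
  also have "closed \<dots>"
    using compact_prob_simplex
    by (intro closed_Int compact_imp_closed closed_INT ballI closed_Collect_le continuous_intros)
  finally show ?thesis by (rule borel_closed)
qed

lemma Expect_p_IS: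
  fixes H :: "real ^ ('m::finite option) \<Rightarrow> real"
  assumes \<alpha>: "\<forall>i. 0 < \<alpha> $ i" and \<theta>s: "\<theta>s \<in> prob_simplex" and N: "0 < N"
    and H[measurable]: "H \<in> borel_measurable borel" and Hmax: "\<forall>\<theta>\<in>prob_simplex. H \<theta> \<le> Hmax"
  shows "Expect (dir_sample N (IS_param \<alpha> \<theta>s \<gamma> n)) (p_IS H \<alpha> \<theta>s \<epsilon> \<gamma> N n)
           = (\<integral>\<theta>. exp (real n * H \<theta>) * indicator (trunc_simplex \<theta>s \<epsilon>) \<theta> \<partial>dirichlet \<alpha>)"
proof -
  define \<beta> where "\<beta> = IS_param \<alpha> \<theta>s \<gamma> n"
  have \<beta>: "\<forall>i. 0 < \<beta> $ i" unfolding \<beta>_def using IS_param_pos[OF \<alpha> \<theta>s] .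
  define g where "g \<theta> = exp (real n * H \<theta>) * indicator (trunc_simplex \<theta>s \<epsilon>) \<theta>" for \<theta>
  have g[measurable]: "g \<in> borel_measurable borel" unfolding g_def by measurable
  have "\<bar>g \<theta>\<bar> \<le> exp (real n * Hmax)" if "\<theta> \<in> prob_simplex" for \<theta>
    using Hmax that by (auto simp: g_def indicator_def intro!: mult_left_mono)
  then have "integrable (dirichlet \<alpha>) g"
    using \<alpha> by (intro integrable_dirichlet_bounded) auto
  note weight = dirichlet_importance_weight[OF \<alpha> \<beta> g this]
  have "p_IS H \<alpha> \<theta>s \<epsilon> \<gamma> N n = (\<lambda>\<omega>. (\<Sum>i<N. g (\<omega> i) * (dir_pdf \<alpha> (\<omega> i) / dir_pdf \<beta> (\<omega> i))) / real N)"
    unfolding p_IS_def g_def \<beta>_def by (simp add: mult_ac)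
  then show ?thesis
    using integral_sample_mean[OF prob_space_dirichlet[OF \<beta>] N _ weight(1)] weight(2)
    unfolding Expect_def dir_sample_def g_def \<beta>_def by simp
qed

lemma abs_bias_IS_le:
  fixes H :: "real ^ ('m::finite option) \<Rightarrow> real"
  assumes \<alpha>: "\<forall>i. 0 < \<alpha> $ i" and \<theta>s: "\<theta>s \<in> prob_simplex" and N: "0 < N"
    and H[measurable]: "H \<in> borel_measurable borel" and Hmax: "\<forall>\<theta>\<in>prob_simplex. H \<theta> \<le> Hmax"
    and H\<^sub>1: "\<forall>\<theta>\<in>prob_simplex - trunc_simplex \<theta>s \<epsilon>. H \<theta> \<le> H\<^sub>1"
  shows "\<bar>bias_IS H \<alpha> \<theta>s \<epsilon> \<gamma> N n\<bar> \<le> exp (real n * H\<^sub>1)"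
proof -
  interpret prob_space "dirichlet \<alpha>" using prob_space_dirichlet[OF \<alpha>] .
  let ?T = "trunc_simplex \<theta>s \<epsilon>"
  define g where "g \<theta> = exp (real n * H \<theta>) * indicator (- ?T) \<theta>" for \<theta>
  have [measurable]: "g \<in> borel_measurable borel" unfolding g_def by measurable
  have g_bound: "\<bar>g \<theta>\<bar> \<le> exp (real n * H\<^sub>1)" if "\<theta> \<in> prob_simplex" for \<theta>
    using H\<^sub>1 that by (auto simp: g_def indicator_def intro!: mult_left_mono)
  have bounded: "\<bar>exp (real n * H \<theta>) * indicator A \<theta>\<bar> \<le> exp (real n * Hmax)" if "\<theta> \<in> prob_simplex" for \<theta> A
    using Hmax that by (auto simp: indicator_def intro!: mult_left_mono)
  have int: "integrable (dirichlet \<alpha>) (\<lambda>\<theta>. exp (real n * H \<theta>) * indicator A \<theta>)" if "A \<in> sets borel" for A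
    using \<alpha> bounded that by (intro integrable_dirichlet_bounded) auto
  have "bias_IS H \<alpha> \<theta>s \<epsilon> \<gamma> N n
      = (\<integral>\<theta>. exp (real n * H \<theta>) * indicator ?T \<theta> \<partial>dirichlet \<alpha>) - (\<integral>\<theta>. exp (real n * H \<theta>) \<partial>dirichlet \<alpha>)"
    using Expect_p_IS[OF \<alpha> \<theta>s N H Hmax] unfolding bias_IS_def I_target_def Expect_def by simp
  also have "\<dots> = - (\<integral>\<theta>. g \<theta> \<partial>dirichlet \<alpha>)"
  proof -
    have "(\<lambda>\<theta>. exp (real n * H \<theta>)) = (\<lambda>\<theta>. exp (real n * H \<theta>) * indicator ?T \<theta> + g \<theta>)"
      by (auto simp: g_def indicator_def fun_eq_iff)
    then show ?thesis
      using int[of ?T] int[of "- ?T"] unfolding g_def by simp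
  qed
  finally have "\<bar>bias_IS H \<alpha> \<theta>s \<epsilon> \<gamma> N n\<bar> = \<bar>\<integral>\<theta>. g \<theta> \<partial>dirichlet \<alpha>\<bar>"
    by simp
  also have "\<dots> \<le> (\<integral>\<theta>. \<bar>g \<theta>\<bar> \<partial>dirichlet \<alpha>)"
    by (rule integral_abs_bound)
  also have "\<dots> \<le> exp (real n * H\<^sub>1)"
  proof (rule integral_le_const)
    show "integrable (dirichlet \<alpha>) (\<lambda>\<theta>. \<bar>g \<theta>\<bar>)"
      using int[of "- ?T"] unfolding g_def by simp
    show "AE \<theta> in dirichlet \<alpha>. \<bar>g \<theta>\<bar> \<le> exp (real n * H\<^sub>1)"
      using AE_dirichlet_prob_simplex[of \<alpha>] by eventually_elim (rule g_bound)
  qed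
  finally show ?thesis .
qed

lemma Expect_p_MC:
  fixes H :: "real ^ ('m::finite option) \<Rightarrow> real"
  assumes \<alpha>: "\<forall>i. 0 < \<alpha> $ i" and N: "0 < N"
    and H[measurable]: "H \<in> borel_measurable borel" and Hmax: "\<forall>\<theta>\<in>prob_simplex. H \<theta> \<le> Hmax"
  shows "Expect (dir_sample N \<alpha>) (p_MC H N n) = I_target H \<alpha> n"
proof -
  have "\<bar>exp (real n * H \<theta>)\<bar> \<le> exp (real n * Hmax)" if "\<theta> \<in> prob_simplex" for \<theta>
    using Hmax that by (auto intro!: mult_left_mono)
  then have "integrable (dirichlet \<alpha>) (\<lambda>\<theta>. exp (real n * H \<theta>))"
    using \<alpha> by (intro integrable_dirichlet_bounded) auto
  then show ?thesis
    using integral_sample_mean[OF prob_space_dirichlet[OF \<alpha>] N]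
    unfolding Expect_def p_MC_def I_target_def dir_sample_def by simp
qed

lemma I_target_ge:
  fixes H :: "real ^ ('m::finite option) \<Rightarrow> real"
  assumes \<alpha>: "\<forall>i. 0 < \<alpha> $ i"
    and H[measurable]: "H \<in> borel_measurable borel" and Hmax: "\<forall>\<theta>\<in>prob_simplex. H \<theta> \<le> Hmax"
    and V[measurable]: "V \<in> sets borel" and HV: "\<forall>\<theta>\<in>V. c \<le> H \<theta>"
  shows "measure (dirichlet \<alpha>) V * exp (real n * c) \<le> I_target H \<alpha> n"
proof -
  interpret prob_space "dirichlet \<alpha>" using prob_space_dirichlet[OF \<alpha>] .
  have "\<bar>exp (real n * H \<theta>)\<bar> \<le> exp (real n * Hmax)" if "\<theta> \<in> prob_simplex" for \<theta>
    using Hmax that by (auto intro!: mult_left_mono)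
  then have "integrable (dirichlet \<alpha>) (\<lambda>\<theta>. exp (real n * H \<theta>))"
    using \<alpha> by (intro integrable_dirichlet_bounded) auto
  moreover have "exp (real n * c) * indicator V \<theta> \<le> exp (real n * H \<theta>)" for \<theta>
    using HV by (auto simp: indicator_def intro!: mult_left_mono)
  ultimately have "(\<integral>\<theta>. exp (real n * c) * indicator V \<theta> \<partial>dirichlet \<alpha>) \<le> I_target H \<alpha> n"
    unfolding I_target_def Expect_def
    by (intro integral_mono integrable_mult_right integrable_real_indicator)
       (auto simp: emeasure_eq_measure)
  then show ?thesis
    by (simp add: mult.commute)
qed

lemma (in prob_space) prob_mult_sq_le_integral_sq_dev:
  fixes Y :: "'a \<Rightarrow> real"
  assumes A: "A \<in> events" and int: "integrable M (\<lambda>x. (Y x - c)\<^sup>2)"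
    and gap: "\<forall>x\<in>A. Y x + d \<le> c" and d: "0 \<le> d"
  shows "prob A * d\<^sup>2 \<le> (\<integral>x. (Y x - c)\<^sup>2 \<partial>M)"
proof -
  have "d\<^sup>2 * indicator A x \<le> (Y x - c)\<^sup>2" for x
  proof (cases "x \<in> A")
    case True
    then have "d\<^sup>2 \<le> (c - Y x)\<^sup>2"
      using gap d by (intro power_mono) auto
    then show ?thesis
      using True by (simp add: power2_commute)
  qed simp
  then have "(\<integral>x. d\<^sup>2 * indicator A x \<partial>M) \<le> (\<integral>x. (Y x - c)\<^sup>2 \<partial>M)"
    using A int by (intro integral_mono integrable_mult_right integrable_real_indicator) (auto simp: emeasure_eq_measure)
  then show ?thesis
    using A by (simp add: mult.commute sets.Int_space_eq2)
qed

lemma p_MC_le_exp: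
  assumes "0 < N" "\<forall>i<N. H (\<omega> i) \<le> c"
  shows "p_MC H N n \<omega> \<le> exp (real n * c)"
proof -
  have "(\<Sum>i<N. exp (real n * H (\<omega> i))) \<le> real (card {..<N}) * exp (real n * c)"
    using assms(2) by (intro sum_bounded_above) (auto intro!: mult_left_mono)
  then show ?thesis
    unfolding p_MC_def using assms(1) by (simp add: divide_le_eq mult.commute)
qed

lemma integrable_p_MC_sq_dev:
  fixes H :: "real ^ ('m::finite option) \<Rightarrow> real"
  assumes \<alpha>: "\<forall>i. 0 < \<alpha> $ i" and N: "0 < N"
    and H[measurable]: "H \<in> borel_measurable borel" and Hmax: "\<forall>\<theta>\<in>prob_simplex. H \<theta> \<le> Hmax"
  shows "integrable (dir_sample N \<alpha>) (\<lambda>\<omega>. (p_MC H N n \<omega> - c)\<^sup>2)"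
proof -
  interpret P: prob_space "dir_sample N \<alpha>" using prob_space_dir_sample[OF \<alpha>] .
  have "AE \<omega> in dir_sample N \<alpha>. \<bar>p_MC H N n \<omega>\<bar> \<le> exp (real n * Hmax)"
    using AE_PiM_all_coordinates[OF prob_space_dirichlet[OF \<alpha>] AE_dirichlet_prob_simplex]
    unfolding dir_sample_def[symmetric]
  proof eventually_elim
    case (elim \<omega>)
    then have "p_MC H N n \<omega> \<le> exp (real n * Hmax)"
      using Hmax N by (intro p_MC_le_exp) auto
    moreover have "0 \<le> p_MC H N n \<omega>"
      unfolding p_MC_def by (auto intro!: divide_nonneg_nonneg sum_nonneg)
    ultimately show ?case by simp
  qed
  then have "AE \<omega> in dir_sample N \<alpha>. norm ((p_MC H N n \<omega> - c)\<^sup>2) \<le> (exp (real n * Hmax) + \<bar>c\<bar>)\<^sup>2"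
    by eventually_elim (simp add: abs_le_square_iff[symmetric])
  moreover have "p_MC H N n \<in> borel_measurable (dir_sample N \<alpha>)"
    unfolding p_MC_def dir_sample_def by measurable
  ultimately show ?thesis
    by (intro P.integrable_const_bound) auto
qed

text \<open>With probability at least \<open>P(B)\<^sup>N\<close> every sample lies in \<open>B\<close>, where \<open>H \<le> c\<^sub>1\<close>; there \<open>p_MC\<close>
  misses \<open>I(n) \<ge> P(V) e\<^sup>n\<^sup>c\<^sup>2\<close> by at least half of that lower bound.\<close>

lemma var_MC_ge:
  fixes H :: "real ^ ('m::finite option) \<Rightarrow> real"
  assumes \<alpha>: "\<forall>i. 0 < \<alpha> $ i" and N: "0 < N"
    and H[measurable]: "H \<in> borel_measurable borel" and Hmax: "\<forall>\<theta>\<in>prob_simplex. H \<theta> \<le> Hmax"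
    and B[measurable]: "B \<in> sets borel" and HB: "\<forall>\<theta>\<in>B. H \<theta> \<le> c\<^sub>1"
    and V[measurable]: "V \<in> sets borel" and HV: "\<forall>\<theta>\<in>V. c\<^sub>2 \<le> H \<theta>"
    and gap: "2 * exp (real n * c\<^sub>1) \<le> measure (dirichlet \<alpha>) V * exp (real n * c\<^sub>2)"
  shows "measure (dirichlet \<alpha>) B ^ N * (measure (dirichlet \<alpha>) V * exp (real n * c\<^sub>2) / 2)\<^sup>2 \<le> var_MC H \<alpha> N n"
proof -
  interpret P: prob_space "dir_sample N \<alpha>" using prob_space_dir_sample[OF \<alpha>] .
  let ?I = "I_target H \<alpha> n" and ?d = "measure (dirichlet \<alpha>) V * exp (real n * c\<^sub>2) / 2"
  define A where "A = PiE {..<N} (\<lambda>_. B)"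
  have "A \<in> P.events"
    unfolding A_def dir_sample_def by (intro sets_PiM_I_finite) auto
  moreover have "p_MC H N n \<omega> + ?d \<le> ?I" if "\<omega> \<in> A" for \<omega>
  proof -
    have "p_MC H N n \<omega> \<le> exp (real n * c\<^sub>1)"
      using that HB by (intro p_MC_le_exp[OF N]) (auto simp: A_def)
    then show ?thesis
      using I_target_ge[OF \<alpha> H Hmax V HV, of n] gap by linarith
  qed
  ultimately have "P.prob A * ?d\<^sup>2 \<le> (\<integral>\<omega>. (p_MC H N n \<omega> - ?I)\<^sup>2 \<partial>dir_sample N \<alpha>)"
    by (intro P.prob_mult_sq_le_integral_sq_dev integrable_p_MC_sq_dev[OF \<alpha> N H Hmax]) auto
  moreover have "P.prob A = measure (dirichlet \<alpha>) B ^ N"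
    unfolding A_def dir_sample_def by (rule measure_PiM_PiE_power[OF prob_space_dirichlet[OF \<alpha>]]) simp
  ultimately show ?thesis
    unfolding var_MC_def Var_def Expect_p_MC[OF \<alpha> N H Hmax] by simp
qed

lemma eventually_exp_dominated:
  fixes p a b C :: real
  assumes p: "0 < p" and ab: "a < b"
  shows "eventually (\<lambda>n. C * exp (real n * a) \<le> p * exp (real n * b)) sequentially"
proof -
  have "filterlim (\<lambda>n. (b - a) * real n) at_top sequentially"
    using ab by (intro filterlim_tendsto_pos_mult_at_top[OF tendsto_const _ filterlim_real_sequentially]) simp
  then have "filterlim (\<lambda>n. exp ((b - a) * real n)) at_top sequentially"
    by (rule filterlim_compose[OF exp_at_top])
  then have "eventually (\<lambda>n. C / p \<le> exp ((b - a) * real n)) sequentially"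
    by (simp add: filterlim_at_top)
  then show ?thesis
  proof eventually_elim
    case (elim n)
    then have "C * exp (real n * a) \<le> p * exp ((b - a) * real n) * exp (real n * a)"
      using p by (intro mult_right_mono) (simp_all add: field_simps)
    also have "\<dots> = p * exp (real n * b)"
      by (simp add: mult.assoc exp_add[symmetric] algebra_simps)
    finally show ?case .
  qed
qed

lemma prob_simplex_other_point:
  obtains v :: "real^('m::finite option)" where "v \<in> prob_simplex" "v \<noteq> \<theta>"
proof -
  define e :: "'m option \<Rightarrow> real^('m option)" where "e i = (\<chi> j. if j = i then 1 else 0)" for i
  have "e i \<in> prob_simplex" for i
    unfolding e_def prob_simplex_def by auto
  moreover have "e None \<noteq> e (Some undefined)"
    unfolding e_def by (auto simp: vec_eq_iff)
  ultimately show ?thesis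
    using that by metis
qed

lemma measure_dirichlet_level_set_pos:
  fixes H :: "real ^ ('m::finite option) \<Rightarrow> real"
  assumes \<alpha>: "\<forall>i. 0 < \<alpha> $ i" and H: "H \<in> borel_measurable borel"
    and cont: "continuous_on prob_simplex H" and x: "x \<in> prob_simplex"
    and U: "open U" "H x \<in> U"
  shows "prob_simplex \<inter> H -` U \<in> sets borel" and "0 < measure (dirichlet \<alpha>) (prob_simplex \<inter> H -` U)"
proof -
  show "prob_simplex \<inter> H -` U \<in> sets borel"
    using measurable_sets[OF H borel_open[OF U(1)]] by auto
  have "openin (top_of_set prob_simplex) (prob_simplex \<inter> H -` U)"
    using continuous_openin_preimage[OF cont, of UNIV U] U by simp
  then show "0 < measure (dirichlet \<alpha>) (prob_simplex \<inter> H -` U)"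
    using x U by (intro measure_dirichlet_openin_pos[OF \<alpha>]) auto
qed

text \<open>The samples are trapped near a second point of the simplex, where \<open>H\<close> is smaller than near
  \<open>\<theta>*\<close>; this is where \<open>K \<ge> 2\<close> is used.\<close>

lemma var_MC_exp_lower:
  fixes H :: "real ^ ('m::finite option) \<Rightarrow> real"
  assumes \<alpha>: "\<forall>i. 0 < \<alpha> $ i" and N: "0 < N" and \<theta>s: "\<theta>s \<in> prob_simplex"
    and H[measurable]: "H \<in> borel_measurable borel" and cont: "continuous_on prob_simplex H"
    and max: "\<forall>\<theta>\<in>prob_simplex. \<theta> \<noteq> \<theta>s \<longrightarrow> H \<theta> < H \<theta>s" and c: "c < H \<theta>s"
  obtains \<kappa> where "0 < \<kappa>" "eventually (\<lambda>n. \<kappa> * exp (2 * real n * c) \<le> var_MC H \<alpha> N n) sequentially"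
proof -
  have Hmax: "\<forall>\<theta>\<in>prob_simplex. H \<theta> \<le> H \<theta>s"
    using max by (metis less_imp_le order_refl)
  obtain v where v: "v \<in> prob_simplex" "v \<noteq> \<theta>s"
    using prob_simplex_other_point .
  define c\<^sub>2 where "c\<^sub>2 = max c ((H v + H \<theta>s) / 2)"
  define c\<^sub>1 where "c\<^sub>1 = (H v + c\<^sub>2) / 2"
  have "H v < H \<theta>s" using max v by auto
  moreover have "(H v + H \<theta>s) / 2 \<le> c\<^sub>2" and c\<^sub>2: "c \<le> c\<^sub>2" "c\<^sub>2 < H \<theta>s"
    using c calculation unfolding c\<^sub>2_def by auto
  ultimately have c\<^sub>1: "H v < c\<^sub>1" "c\<^sub>1 < c\<^sub>2"
    unfolding c\<^sub>1_def by auto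
  define B where "B = prob_simplex \<inter> H -` {..<c\<^sub>1}"
  define V where "V = prob_simplex \<inter> H -` {c\<^sub>2<..}"
  have B: "B \<in> sets borel" "0 < measure (dirichlet \<alpha>) B"
    using measure_dirichlet_level_set_pos[OF \<alpha> H cont v(1), of "{..<c\<^sub>1}"] c\<^sub>1 unfolding B_def by auto
  have V: "V \<in> sets borel" "0 < measure (dirichlet \<alpha>) V"
    using measure_dirichlet_level_set_pos[OF \<alpha> H cont \<theta>s, of "{c\<^sub>2<..}"] c\<^sub>2 unfolding V_def by auto
  define \<kappa> where "\<kappa> = measure (dirichlet \<alpha>) B ^ N * (measure (dirichlet \<alpha>) V)\<^sup>2 / 4"
  show ?thesis
  proof
    show "0 < \<kappa>"
      unfolding \<kappa>_def using B V by simp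
    show "eventually (\<lambda>n. \<kappa> * exp (2 * real n * c) \<le> var_MC H \<alpha> N n) sequentially"
      using eventually_exp_dominated[OF V(2) c\<^sub>1(2), of 2]
    proof eventually_elim
      case (elim n)
      have "\<kappa> * exp (2 * real n * c) \<le> \<kappa> * exp (2 * real n * c\<^sub>2)"
        using \<open>0 < \<kappa>\<close> c\<^sub>2 by (simp add: mult_left_mono)
      also have "\<dots> = measure (dirichlet \<alpha>) B ^ N * (measure (dirichlet \<alpha>) V * exp (real n * c\<^sub>2) / 2)\<^sup>2"
        unfolding \<kappa>_def by (simp add: power2_eq_square exp_add[symmetric] field_simps)
      also have "\<dots> \<le> var_MC H \<alpha> N n"
        using elim B V by (intro var_MC_ge[OF \<alpha> N H Hmax]) (auto simp: B_def V_def less_imp_le)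
      finally show ?case .
    qed
  qed
qed

lemma var_MC_nonmeasurable:
  fixes H :: "real ^ ('m::finite option) \<Rightarrow> real"
  assumes H: "H \<notin> borel_measurable borel" and N: "0 < N" and n: "0 < n"
  shows "var_MC H \<alpha> N n = 0"
proof -
  let ?P = "dir_sample N \<alpha>" and ?Y = "p_MC H N n"
  have diagonal: "(\<lambda>\<theta>. \<lambda>i\<in>{..<N}. \<theta>) \<in> borel \<rightarrow>\<^sub>M ?P"
    unfolding dir_sample_def by (intro measurable_restrict) (simp add: measurable_ident_sets)
  have Y_nonmeasurable: "?Y \<notin> borel_measurable ?P"
  proof
    assume "?Y \<in> borel_measurable ?P"
    from measurable_comp[OF diagonal this]
    have "(\<lambda>\<theta>. exp (real n * H \<theta>)) \<in> borel_measurable borel"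
      using N by (simp add: comp_def p_MC_def)
    then have "(\<lambda>\<theta>. ln (exp (real n * H \<theta>)) / real n) \<in> borel_measurable borel"
      by measurable
    moreover have "(\<lambda>\<theta>. ln (exp (real n * H \<theta>)) / real n) = H"
      using n by (simp add: fun_eq_iff)
    ultimately show False using H by simp
  qed
  then have "Expect ?P ?Y = 0"
    unfolding Expect_def by (auto intro!: not_integrable_integral_eq dest: borel_measurable_integrable)
  moreover have "\<not> integrable ?P (\<lambda>\<omega>. (?Y \<omega> - 0)\<^sup>2)"
  proof
    assume "integrable ?P (\<lambda>\<omega>. (?Y \<omega> - 0)\<^sup>2)"
    then have "(\<lambda>\<omega>. (?Y \<omega>)\<^sup>2) \<in> borel_measurable ?P"
      by (auto dest: borel_measurable_integrable)
    then have "(\<lambda>\<omega>. sqrt ((?Y \<omega>)\<^sup>2)) \<in> borel_measurable ?P"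
      by measurable
    moreover have "(\<lambda>\<omega>. sqrt ((?Y \<omega>)\<^sup>2)) = ?Y"
      unfolding p_MC_def by (simp add: fun_eq_iff abs_of_nonneg sum_nonneg)
    ultimately show False using Y_nonmeasurable by simp
  qed
  ultimately show ?thesis
    unfolding var_MC_def Var_def by (simp add: not_integrable_integral_eq)
qed

lemma trunc_simplex_complement_gap:
  fixes H :: "real ^ ('m::finite option) \<Rightarrow> real"
  assumes cont: "continuous_on prob_simplex H" and \<theta>s: "\<theta>s \<in> prob_simplex"
    and max: "\<forall>\<theta>\<in>prob_simplex. \<theta> \<noteq> \<theta>s \<longrightarrow> H \<theta> < H \<theta>s"
    and \<epsilon>: "\<forall>i. 0 < \<theta>s $ i \<longrightarrow> \<epsilon> < \<theta>s $ i"
  obtains H\<^sub>1 where "H\<^sub>1 < H \<theta>s" "\<forall>\<theta>\<in>prob_simplex - trunc_simplex \<theta>s \<epsilon>. H \<theta> \<le> H\<^sub>1"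
proof -
  define C where "C = prob_simplex \<inter> (\<Union>i\<in>{i. 0 < \<theta>s $ i}. {\<theta>. \<theta> $ i \<le> \<epsilon>})"
  have "compact C"
    unfolding C_def
    by (intro compact_Int_closed compact_prob_simplex closed_UN ballI closed_Collect_le continuous_intros) auto
  have complement: "prob_simplex - trunc_simplex \<theta>s \<epsilon> \<subseteq> C"
    unfolding C_def trunc_simplex_def by (auto simp: not_le intro: less_imp_le)
  show ?thesis
  proof (cases "C = {}")
    case True
    then show ?thesis
      using that[of "H \<theta>s - 1"] complement by auto
  next
    case False
    obtain \<theta>\<^sub>m where \<theta>\<^sub>m: "\<theta>\<^sub>m \<in> C" "\<forall>\<theta>\<in>C. H \<theta> \<le> H \<theta>\<^sub>m"
      using continuous_attains_sup[OF \<open>compact C\<close> False continuous_on_subset[OF cont]]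
      unfolding C_def by blast
    moreover have "\<theta>\<^sub>m \<noteq> \<theta>s"
      using \<theta>\<^sub>m(1) \<epsilon> unfolding C_def by force
    ultimately have "H \<theta>\<^sub>m < H \<theta>s"
      using max unfolding C_def by blast
    then show ?thesis
      using that[of "H \<theta>\<^sub>m"] complement \<theta>\<^sub>m(2) by blast
  qed
qed

lemma sq_ratio_bigo_exp:
  fixes b v :: "nat \<Rightarrow> real"
  assumes b: "eventually (\<lambda>n. \<bar>b n\<bar> \<le> exp (real n * a)) sequentially"
    and v: "eventually (\<lambda>n. \<kappa> * exp (2 * real n * (a + \<delta>)) \<le> v n) sequentially" and \<kappa>: "0 < \<kappa>"
  shows "(\<lambda>n. (b n)\<^sup>2 / v n) \<in> O(\<lambda>n. exp (- 2 * real n * \<delta>))"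
proof (rule bigoI[where c="1 / \<kappa>"])
  show "eventually (\<lambda>n. norm ((b n)\<^sup>2 / v n) \<le> 1 / \<kappa> * norm (exp (- 2 * real n * \<delta>))) sequentially"
    using b v
  proof eventually_elim
    case (elim n)
    have v_pos: "0 < \<kappa> * exp (2 * real n * (a + \<delta>))"
      using \<kappa> by simp
    have "(b n)\<^sup>2 \<le> (exp (real n * a))\<^sup>2"
      using elim(1) by (simp add: abs_le_square_iff[symmetric])
    also have "\<dots> = exp (2 * real n * a)"
      by (simp add: power2_eq_square exp_add[symmetric])
    finally have "(b n)\<^sup>2 / v n \<le> exp (2 * real n * a) / (\<kappa> * exp (2 * real n * (a + \<delta>)))"
      using elim(2) v_pos by (intro frac_le) auto
    also have "\<dots> = 1 / \<kappa> * exp (- 2 * real n * \<delta>)"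
      using \<kappa> by (simp add: distrib_left exp_add exp_minus field_simps)
    finally show ?case
      using elim(2) v_pos by simp
  qed
qed

theorem lemma1:
  fixes H :: "real ^ ('m::finite option) \<Rightarrow> real"
    and \<alpha> \<theta>s :: "real ^ ('m option)"
    and G :: "real ^ ('m option) \<Rightarrow> real ^ ('m option)"
    and Hs :: "real ^ ('m option) \<Rightarrow> real ^ ('m option) ^ ('m option)"
    and U :: "(real ^ ('m option)) set"
    and N :: nat and \<epsilon> :: real
  defines "Z \<equiv> {i. \<theta>s $ i = 0}"
  assumes alpha_pos: "\<forall>i. 0 < \<alpha> $ i"
    and theta_in: "\<theta>s \<in> prob_simplex"
    and A1: "\<forall>\<theta>\<in>prob_simplex. \<theta> \<noteq> \<theta>s \<longrightarrow> H \<theta> < H \<theta>s"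
    and A2_cont: "continuous_on prob_simplex H"
    and A2_U: "open U" "\<theta>s \<in> U"
    and A2_grad: "\<forall>x\<in>U. (H has_derivative (\<lambda>h. G x \<bullet> h)) (at x)"
    and A2_hess: "\<forall>x\<in>U. (G has_derivative (\<lambda>h. Hs x *v h)) (at x)"
    and A2_C2: "continuous_on U Hs"
    and A2_KKT: "\<exists>lam \<mu>. (\<forall>i\<in>Z. 0 \<le> lam i) \<and>
                   G \<theta>s = (\<chi> i. (if i \<in> Z then - lam i else 0) + \<mu>)"
    and A3: "\<forall>lam \<mu>. (\<forall>i\<in>Z. 0 \<le> lam i) \<and>
                   G \<theta>s = (\<chi> i. (if i \<in> Z then - lam i else 0) + \<mu>) \<longrightarrow> (\<forall>i\<in>Z. 0 < lam i)"
    and A4: "\<forall>d. d \<noteq> 0 \<and> (\<Sum>i\<in>UNIV. d $ i) = 0 \<and> (\<forall>i\<in>Z. d $ i = 0) \<longrightarrow> d \<bullet> (Hs \<theta>s *v d) < 0"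
    and N_pos: "0 < N"
    and eps_pos: "0 < \<epsilon>"
    and eps_lt: "\<forall>i. 0 < \<theta>s $ i \<longrightarrow> \<epsilon> < \<theta>s $ i"
  shows "\<exists>\<delta>>0. \<forall>\<gamma>. 0 < \<gamma> \<and> \<gamma> < 1 \<longrightarrow>
           (\<lambda>n. (bias_IS H \<alpha> \<theta>s \<epsilon> \<gamma> N n)\<^sup>2 / var_MC H \<alpha> N n) \<in> O(\<lambda>n. exp (- 2 * real n * \<delta>))"
proof -
  obtain H\<^sub>1 where H\<^sub>1: "H\<^sub>1 < H \<theta>s" "\<forall>\<theta>\<in>prob_simplex - trunc_simplex \<theta>s \<epsilon>. H \<theta> \<le> H\<^sub>1"
    using trunc_simplex_complement_gap[OF A2_cont theta_in A1 eps_lt] .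
  define \<delta> where "\<delta> = (H \<theta>s - H\<^sub>1) / 2"
  have "(\<lambda>n. (bias_IS H \<alpha> \<theta>s \<epsilon> \<gamma> N n)\<^sup>2 / var_MC H \<alpha> N n) \<in> O(\<lambda>n. exp (- 2 * real n * \<delta>))" for \<gamma>
  proof (cases "H \<in> borel_measurable borel")
    case True
    have "H\<^sub>1 + \<delta> < H \<theta>s"
      using H\<^sub>1(1) unfolding \<delta>_def by (simp add: field_simps)
    then obtain \<kappa> where "0 < \<kappa>"
      "eventually (\<lambda>n. \<kappa> * exp (2 * real n * (H\<^sub>1 + \<delta>)) \<le> var_MC H \<alpha> N n) sequentially"
      by (rule var_MC_exp_lower[OF alpha_pos N_pos theta_in True A2_cont A1])
    moreover have "\<bar>bias_IS H \<alpha> \<theta>s \<epsilon> \<gamma> N n\<bar> \<le> exp (real n * H\<^sub>1)" for n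
      using A1 by (intro abs_bias_IS_le[where Hmax="H \<theta>s", OF alpha_pos theta_in N_pos True _ H\<^sub>1(2)]) (metis less_imp_le order_refl)
    ultimately show ?thesis
      by (intro sq_ratio_bigo_exp) auto
  next
    text \<open>Junk case: the Bochner integrals of non-measurable functions are \<open>0\<close>, so is the ratio.\<close>
    case False
    have "eventually (\<lambda>n. var_MC H \<alpha> N n = 0) sequentially"
      using eventually_gt_at_top[of "0::nat"] by eventually_elim (rule var_MC_nonmeasurable[OF False N_pos])
    then show ?thesis
      by (intro bigoI[where c=0]) (auto elim!: eventually_mono)
  qed
  moreover have "0 < \<delta>"
    using H\<^sub>1(1) unfolding \<delta>_def by simp
  ultimately show ?thesis
    by blast
qed
end
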